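(* Let $G$ be a GTG on $n$ nodes in the $d$-dimensional toric unit cube $[0,1]^d$ at the connectivity threshold, i.e. with threshold function $\theta_n=cn/\log n$ where $c<\sup_{\alpha\in(0,1)}\alpha F^{-1}(1-\alpha)/4$. Then with high probability the number of edges satisfies $|E(G)|=\Theta(n\log n)$.
   Context: GTG model: $n$ nodes are placed independently and uniformly at random in the toric unit cube $[0,1]^d$, $d\ge2$ (toric Euclidean distances $r_{ij}$). Each node independently receives a weight from a continuous density $f$ on $\mathbb{R}^+$ with finite mean and variance, with cdf $F$ and quantile $F^{-1}(p)=\inf\{x\ge0:p\le F(x)\}$, satisfying $\mathbb{P}[W\ge x]=O(1/x^{d+\nu})$ for a constant $\nu>0$. Nodes $i,j$ are adjacent iff $(w_i+w_j)/r_{ij}^d\ge\theta_n$. "With high probability" means with probability $1-o(1)$ as $n\to\infty$. *)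

theory Defs
  imports "HOL-Probability.Probability"
begin

definition toric_dist :: "real^('d::finite) \<Rightarrow> real^('d::finite) \<Rightarrow> real" where
  "toric_dist x y = sqrt (\<Sum>i\<in>UNIV. (min \<bar>x$i - y$i\<bar> (1 - \<bar>x$i - y$i\<bar>))\<^sup>2)"

definition node_measure :: "(real \<Rightarrow> real) \<Rightarrow> ((real^('d::finite)) \<times> real) measure" where
  "node_measure f = uniform_measure lborel (cbox (0::real^('d::finite)) One) \<Otimes>\<^sub>M density lborel (\<lambda>x. ennreal (f x))"

definition gtg_space :: "(real \<Rightarrow> real) \<Rightarrow> nat \<Rightarrow> (nat \<Rightarrow> (real^('d::finite)) \<times> real) measure" where
  "gtg_space f n = PiM {..<n} (\<lambda>_. node_measure f)"

definition gtg_adj :: "real \<Rightarrow> (nat \<Rightarrow> (real^('d::finite)) \<times> real) \<Rightarrow> nat \<Rightarrow> nat \<Rightarrow> bool" where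
  "gtg_adj theta \<omega> i j =
     ((snd (\<omega> i) + snd (\<omega> j)) / (toric_dist (fst (\<omega> i)) (fst (\<omega> j))) ^ CARD('d) \<ge> theta)"

definition gtg_edges :: "real \<Rightarrow> nat \<Rightarrow> (nat \<Rightarrow> (real^('d::finite)) \<times> real) \<Rightarrow> nat" where
  "gtg_edges theta n \<omega> = card {(i, j). i < j \<and> j < n \<and> gtg_adj theta \<omega> i j}"

definition cdf_of :: "(real \<Rightarrow> real) \<Rightarrow> real \<Rightarrow> real" where
  "cdf_of f x = (LINT t:{..x}|lborel. f t)"

definition quantile_of :: "(real \<Rightarrow> real) \<Rightarrow> real \<Rightarrow> real" where
  "quantile_of f p = Inf {x. 0 \<le> x \<and> p \<le> cdf_of f x}"

end

theory Submission
  imports Defs "HOL-Real_Asymp.Real_Asymp"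
begin

text \<open>
  Write \<open>\<theta> = c n / log n\<close>. Given one node of weight \<open>w\<^sub>0\<close>, the positions adjacent to a node of
  weight \<open>w\<close> lie in a toric ball of volume at most \<open>C (w\<^sub>0 + w) / \<theta>\<close>, and for \<open>w\<^sub>0\<close> bounded
  below they contain a ball of volume of order \<open>1 / \<theta>\<close>. As the weights have finite mean, the
  probability \<open>p\<close> of an edge is of order \<open>1 / \<theta>\<close>, so the expected number of edges
  \<open>n (n - 1) p / 2\<close> is of order \<open>n log n\<close>. In the variance, pairs of potential edges on four
  distinct nodes are independent, and each of the \<open>O(n\<^sup>3)\<close> pairs sharing a node contributes
  \<open>O(1 / \<theta>\<^sup>2)\<close> because the weights have a finite second moment. Hence the variance is
  \<open>O(n log\<^sup>2 n)\<close>, and Chebyshev's inequality keeps the number of edges within a factor two of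
  its mean with probability \<open>1 - O(1 / n)\<close>.
\<close>

section \<open>Independent coordinates of a product of identical factors\<close>

lemma indep_vars_PiM_components:
  assumes N: "prob_space N" and I: "I \<noteq> {}"
  shows "prob_space.indep_vars (PiM I (\<lambda>_. N)) (\<lambda>_. N) (\<lambda>i \<omega>. \<omega> i) I"
proof -
  interpret P: prob_space "PiM I (\<lambda>_. N)" by (intro prob_space_PiM N)
  have "distr (PiM I (\<lambda>_. N)) (PiM I (\<lambda>_. N)) (\<lambda>x. \<lambda>i\<in>I. x i)
      = distr (PiM I (\<lambda>_. N)) (PiM I (\<lambda>_. N)) (\<lambda>x. x)"
    by (rule distr_cong) (auto simp: space_PiM)
  also have "\<dots> = PiM I (\<lambda>i. distr (PiM I (\<lambda>_. N)) N (\<lambda>\<omega>. \<omega> i))"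
    by (auto intro!: PiM_cong simp: distr_PiM_component[OF N])
  finally show ?thesis
    by (subst P.indep_vars_iff_distr_eq_PiM'[OF I]) auto
qed

lemma distr_PiM_disjoint_blocks:
  assumes N: "prob_space N" and AB: "A \<inter> B = {}" "A \<subseteq> I" "B \<subseteq> I" "A \<noteq> {}"
    and g: "g \<in> measurable (PiM A (\<lambda>_. N)) M" and h: "h \<in> measurable (PiM B (\<lambda>_. N)) M"
  shows "distr (PiM I (\<lambda>_. N)) (M \<Otimes>\<^sub>M M) (\<lambda>\<omega>. (g (restrict \<omega> A), h (restrict \<omega> B)))
       = distr (PiM I (\<lambda>_. N)) M (\<lambda>\<omega>. g (restrict \<omega> A)) \<Otimes>\<^sub>M distr (PiM I (\<lambda>_. N)) M (\<lambda>\<omega>. h (restrict \<omega> B))"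
proof -
  interpret P: prob_space "PiM I (\<lambda>_. N)" by (intro prob_space_PiM N)
  have "I \<noteq> {}" using AB by auto
  have ind: "P.indep_var (PiM A (\<lambda>_. N)) (\<lambda>\<omega>. restrict \<omega> A) (PiM B (\<lambda>_. N)) (\<lambda>\<omega>. restrict \<omega> B)"
    using P.indep_var_restrict[OF indep_vars_PiM_components[OF N \<open>I \<noteq> {}\<close>] AB(1-3)] by simp
  have "P.indep_var M (g \<circ> (\<lambda>\<omega>. restrict \<omega> A)) M (h \<circ> (\<lambda>\<omega>. restrict \<omega> B))"
    using ind g h by (rule P.indep_var_compose)
  then have "P.indep_var M (\<lambda>\<omega>. g (restrict \<omega> A)) M (\<lambda>\<omega>. h (restrict \<omega> B))"
    by (simp add: o_def)
  then show ?thesis by (simp add: P.indep_var_distribution_eq)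
qed

lemma distr_PiM_pair_components:
  assumes N: "prob_space N" and "i \<in> I" "j \<in> I" "i \<noteq> j"
  shows "distr (PiM I (\<lambda>_. N)) (N \<Otimes>\<^sub>M N) (\<lambda>\<omega>. (\<omega> i, \<omega> j)) = N \<Otimes>\<^sub>M N"
  using distr_PiM_disjoint_blocks[OF N, of "{i}" "{j}" I "\<lambda>x. x i" N "\<lambda>x. x j"] assms
  by (simp add: distr_PiM_component[OF N])

lemma distr_PiM_disjoint_pairs:
  assumes N: "prob_space N" and "i \<in> I" "j \<in> I" "k \<in> I" "l \<in> I" "i \<noteq> j" "k \<noteq> l"
    and "{i, j} \<inter> {k, l} = {}"
  shows "distr (PiM I (\<lambda>_. N)) ((N \<Otimes>\<^sub>M N) \<Otimes>\<^sub>M (N \<Otimes>\<^sub>M N)) (\<lambda>\<omega>. ((\<omega> i, \<omega> j), (\<omega> k, \<omega> l)))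
       = (N \<Otimes>\<^sub>M N) \<Otimes>\<^sub>M (N \<Otimes>\<^sub>M N)"
  using distr_PiM_disjoint_blocks[OF N, of "{i, j}" "{k, l}" I "\<lambda>x. (x i, x j)" "N \<Otimes>\<^sub>M N"
      "\<lambda>x. (x k, x l)"] assms
  by (simp add: distr_PiM_pair_components[OF N])

lemma emeasure_PiM_pair_events_common_node:
  assumes N: "prob_space N" and sN: "space N = UNIV"
    and "i \<in> I" "j \<in> I" "k \<in> I" "i \<noteq> j" "i \<noteq> k" "j \<noteq> k"
    and R: "R \<in> sets (N \<Otimes>\<^sub>M N)"
  shows "emeasure (PiM I (\<lambda>_. N)) {\<omega>\<in>space (PiM I (\<lambda>_. N)). (\<omega> i, \<omega> j) \<in> R \<and> (\<omega> i, \<omega> k) \<in> R}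
     = (\<integral>\<^sup>+u. emeasure N (Pair u -` R) ^ 2 \<partial>N)"
proof -
  interpret N: prob_space N by fact
  interpret N2: prob_space "N \<Otimes>\<^sub>M N" by (intro prob_space_pair N)
  define M where "M = PiM I (\<lambda>_. N)"
  \<comment> \<open>\<open>indep_var\<close> needs both blocks in the same type, hence the diagonal copy of the common node\<close>
  define D where "D = distr M (N \<Otimes>\<^sub>M N) (\<lambda>\<omega>. (\<omega> i, \<omega> i))"
  have distr_eq: "distr M ((N \<Otimes>\<^sub>M N) \<Otimes>\<^sub>M (N \<Otimes>\<^sub>M N)) (\<lambda>\<omega>. ((\<omega> i, \<omega> i), (\<omega> j, \<omega> k))) = D \<Otimes>\<^sub>M (N \<Otimes>\<^sub>M N)"
    using distr_PiM_disjoint_blocks[OF N, of "{i}" "{j, k}" I "\<lambda>x. (x i, x i)" "N \<Otimes>\<^sub>M N" "\<lambda>x. (x j, x k)"] assms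
    by (simp add: distr_PiM_pair_components[OF N] D_def M_def)
  define S where "S = {x \<in> space ((N \<Otimes>\<^sub>M N) \<Otimes>\<^sub>M (N \<Otimes>\<^sub>M N)).
    (fst (fst x), fst (snd x)) \<in> R \<and> (fst (fst x), snd (snd x)) \<in> R}"
  have S: "S \<in> sets ((N \<Otimes>\<^sub>M N) \<Otimes>\<^sub>M (N \<Otimes>\<^sub>M N))" unfolding S_def using R by measurable
  have sets_D: "sets D = sets (N \<Otimes>\<^sub>M N)" by (simp add: D_def)
  have "emeasure M {\<omega>\<in>space M. (\<omega> i, \<omega> j) \<in> R \<and> (\<omega> i, \<omega> k) \<in> R}
      = emeasure M ((\<lambda>\<omega>. ((\<omega> i, \<omega> i), (\<omega> j, \<omega> k))) -` S \<inter> space M)"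
    by (rule arg_cong[where f="emeasure M"]) (auto simp: S_def space_pair_measure sN)
  also have "\<dots> = emeasure (D \<Otimes>\<^sub>M (N \<Otimes>\<^sub>M N)) S"
    using assms S by (subst distr_eq[symmetric], subst emeasure_distr) (auto simp: M_def)
  also have "\<dots> = (\<integral>\<^sup>+x. emeasure (N \<Otimes>\<^sub>M N) (Pair x -` S) \<partial>D)"
    using S by (intro N2.emeasure_pair_measure_alt) (simp add: sets_pair_measure_cong[OF sets_D refl])
  also have "\<dots> = (\<integral>\<^sup>+x. emeasure N (Pair (fst x) -` R) ^ 2 \<partial>D)"
  proof (rule nn_integral_cong)
    fix x :: "'a \<times> 'a"
    have "Pair x -` S = (Pair (fst x) -` R) \<times> (Pair (fst x) -` R)"
      by (auto simp: S_def space_pair_measure sN)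
    then show "emeasure (N \<Otimes>\<^sub>M N) (Pair x -` S) = emeasure N (Pair (fst x) -` R) ^ 2"
      using R by (simp add: N.emeasure_pair_measure_Times power2_eq_square)
  qed
  also have "\<dots> = (\<integral>\<^sup>+u. emeasure N (Pair u -` R) ^ 2 \<partial>distr M N (\<lambda>\<omega>. \<omega> i))"
    using assms R unfolding D_def
    by (simp add: nn_integral_distr N.measurable_emeasure_Pair M_def)
  also have "\<dots> = (\<integral>\<^sup>+u. emeasure N (Pair u -` R) ^ 2 \<partial>N)"
    using assms by (simp add: M_def distr_PiM_component[OF N])
  finally show ?thesis by (simp add: M_def)
qed

section \<open>The second-moment method for edge counts\<close>

definition index_pairs :: "nat \<Rightarrow> (nat \<times> nat) set" where
  "index_pairs n = {(i, j). i < j \<and> j < n}"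

definition edge_count :: "('a \<times> 'a) set \<Rightarrow> nat \<Rightarrow> (nat \<Rightarrow> 'a) \<Rightarrow> nat" where
  "edge_count R n \<omega> = card {(i, j). i < j \<and> j < n \<and> (\<omega> i, \<omega> j) \<in> R}"

lemma finite_index_pairs[simp]: "finite (index_pairs n)"
  unfolding index_pairs_def by (rule finite_subset[of _ "{..<n} \<times> {..<n}"]) auto

lemma index_pairs_Suc: "index_pairs (Suc n) = index_pairs n \<union> (\<lambda>i. (i, n)) ` {..<n}"
  by (auto simp: index_pairs_def less_Suc_eq)

lemma card_index_pairs: "2 * card (index_pairs n) = n * (n - 1)"
proof (induction n)
  case (Suc n)
  have "index_pairs n \<inter> (\<lambda>i. (i, n)) ` {..<n} = {}" by (auto simp: index_pairs_def)
  then have "card (index_pairs (Suc n)) = card (index_pairs n) + n"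
    unfolding index_pairs_Suc by (simp add: card_Un_disjoint card_image inj_on_def)
  then show ?case using Suc.IH by (cases n) (auto simp: algebra_simps)
qed (simp add: index_pairs_def)

lemma card_index_pairs_bounds:
  assumes "n \<ge> 2"
  shows "real n ^ 2 \<le> 4 * real (card (index_pairs n))" "real (card (index_pairs n)) \<le> real n ^ 2"
proof -
  have "real (n - 1) = real n - 1" using assms by (simp add: of_nat_diff)
  then have "2 * real (card (index_pairs n)) = real n * (real n - 1)"
    using arg_cong[OF card_index_pairs[of n], of real] by simp
  moreover have "2 * real n \<le> real n ^ 2" using assms by (simp add: power2_eq_square)
  ultimately show "real n ^ 2 \<le> 4 * real (card (index_pairs n))" "real (card (index_pairs n)) \<le> real n ^ 2"
    by (simp_all add: power2_eq_square algebra_simps)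
qed

lemma card_overlapping_index_pairs:
  "card {(e, e'). e \<in> index_pairs n \<and> e' \<in> index_pairs n \<and> {fst e, snd e} \<inter> {fst e', snd e'} \<noteq> {}}
     \<le> 4 * n ^ 3"
proof -
  let ?T = "{..<n} \<times> {..<n} \<times> {..<n}"
  let ?S = "{(e, e'). e \<in> index_pairs n \<and> e' \<in> index_pairs n \<and> {fst e, snd e} \<inter> {fst e', snd e'} \<noteq> {}}"
  define f1 where "f1 = (\<lambda>(i::nat, j::nat, l::nat). ((i, j), (i, l)))"
  define f2 where "f2 = (\<lambda>(i::nat, j::nat, l::nat). ((i, j), (l, i)))"
  define f3 where "f3 = (\<lambda>(i::nat, j::nat, l::nat). ((i, j), (j, l)))"
  define f4 where "f4 = (\<lambda>(i::nat, j::nat, l::nat). ((i, j), (l, j)))"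
  have "?S \<subseteq> f1 ` ?T \<union> f2 ` ?T \<union> f3 ` ?T \<union> f4 ` ?T"
  proof
    fix x assume "x \<in> ?S"
    then obtain i j k l where x: "x = ((i, j), (k, l))" "i < j" "j < n" "k < l" "l < n"
      and "i = k \<or> i = l \<or> j = k \<or> j = l"
      by (auto simp: index_pairs_def)
    then consider "x = f1 (i, j, l)" | "x = f2 (i, j, k)" | "x = f3 (i, j, l)" | "x = f4 (i, j, k)"
      by (auto simp: f1_def f2_def f3_def f4_def)
    then show "x \<in> f1 ` ?T \<union> f2 ` ?T \<union> f3 ` ?T \<union> f4 ` ?T"
      by cases (use x in \<open>auto intro: rev_image_eqI\<close>)
  qed
  then have "card ?S \<le> card (f1 ` ?T \<union> f2 ` ?T \<union> f3 ` ?T \<union> f4 ` ?T)"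
    by (intro card_mono) auto
  also have "\<dots> \<le> card (f1 ` ?T) + card (f2 ` ?T) + card (f3 ` ?T) + card (f4 ` ?T)"
    by (meson add_mono card_Un_le le_trans order_refl)
  also have "\<dots> \<le> 4 * card ?T"
    using card_image_le[of ?T f1] card_image_le[of ?T f2] card_image_le[of ?T f3]
      card_image_le[of ?T f4] by simp
  also have "card ?T = n ^ 3" by (simp add: card_cartesian_product power3_eq_cube)
  finally show ?thesis .
qed

locale iid_vertex_graph =
  fixes N :: "'a measure" and R :: "('a \<times> 'a) set" and n :: nat
  assumes prob_space_N: "prob_space N" and space_N: "space N = UNIV"
    and sets_R: "R \<in> sets (N \<Otimes>\<^sub>M N)" and sym_R: "(u, v) \<in> R \<Longrightarrow> (v, u) \<in> R"
begin

sublocale P: prob_space "PiM {..<n} (\<lambda>_. N)"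
  by (intro prob_space_PiM prob_space_N)

definition edge_prob :: real where
  "edge_prob = measure (N \<Otimes>\<^sub>M N) R"

definition edge_event :: "nat \<times> nat \<Rightarrow> (nat \<Rightarrow> 'a) set" where
  "edge_event e = {\<omega> \<in> space (PiM {..<n} (\<lambda>_. N)). (\<omega> (fst e), \<omega> (snd e)) \<in> R}"

lemma edge_event_sets: "e \<in> index_pairs n \<Longrightarrow> edge_event e \<in> P.events"
  unfolding edge_event_def index_pairs_def using sets_R by auto measurable

lemma edge_event_swap: "edge_event (i, j) = edge_event (j, i)"
  unfolding edge_event_def using sym_R by auto

lemma prob_edge_event:
  assumes "e \<in> index_pairs n"
  shows "P.prob (edge_event e) = edge_prob"
proof -
  obtain i j where e: "e = (i, j)" "i < j" "j < n" using assms by (auto simp: index_pairs_def)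
  have "measure (N \<Otimes>\<^sub>M N) R
      = measure (distr (PiM {..<n} (\<lambda>_. N)) (N \<Otimes>\<^sub>M N) (\<lambda>\<omega>. (\<omega> i, \<omega> j))) R"
    using e by (simp add: distr_PiM_pair_components[OF prob_space_N])
  also have "\<dots> = P.prob (edge_event e)"
    using e sets_R by (subst measure_distr) (auto simp: edge_event_def vimage_def Int_def conj_commute)
  finally show ?thesis by (simp add: edge_prob_def)
qed

lemma prob_disjoint_edge_events:
  assumes "(i, j) \<in> index_pairs n" "(k, l) \<in> index_pairs n" "{i, j} \<inter> {k, l} = {}"
  shows "P.prob (edge_event (i, j) \<inter> edge_event (k, l)) = edge_prob ^ 2"
proof -
  interpret NN: prob_space "N \<Otimes>\<^sub>M N" by (intro prob_space_pair prob_space_N)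
  have "measure (N \<Otimes>\<^sub>M N) R ^ 2 = measure ((N \<Otimes>\<^sub>M N) \<Otimes>\<^sub>M (N \<Otimes>\<^sub>M N)) (R \<times> R)"
    using sets_R by (simp add: measure_def NN.emeasure_pair_measure_Times enn2real_mult power2_eq_square)
  also have "\<dots> = measure (distr (PiM {..<n} (\<lambda>_. N)) ((N \<Otimes>\<^sub>M N) \<Otimes>\<^sub>M (N \<Otimes>\<^sub>M N))
      (\<lambda>\<omega>. ((\<omega> i, \<omega> j), (\<omega> k, \<omega> l)))) (R \<times> R)"
    using assms by (simp add: distr_PiM_disjoint_pairs[OF prob_space_N] index_pairs_def)
  also have "\<dots> = P.prob (edge_event (i, j) \<inter> edge_event (k, l))"
    using assms sets_R
    by (subst measure_distr) (auto simp: edge_event_def index_pairs_def intro!: arg_cong[where f="measure _"])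
  finally show ?thesis by (simp add: edge_prob_def)
qed

lemma prob_edge_events_common_node_le:
  assumes "s < n" "a < n" "b < n" "s \<noteq> a" "s \<noteq> b" "a \<noteq> b"
    and q: "(\<integral>\<^sup>+u. emeasure N (Pair u -` R) ^ 2 \<partial>N) \<le> ennreal q" and "q \<ge> 0"
  shows "P.prob (edge_event (s, a) \<inter> edge_event (s, b)) \<le> q"
proof -
  have "edge_event (s, a) \<inter> edge_event (s, b)
      = {\<omega> \<in> space (PiM {..<n} (\<lambda>_. N)). (\<omega> s, \<omega> a) \<in> R \<and> (\<omega> s, \<omega> b) \<in> R}"
    by (auto simp: edge_event_def)
  then have "emeasure (PiM {..<n} (\<lambda>_. N)) (edge_event (s, a) \<inter> edge_event (s, b)) \<le> ennreal q"
    using emeasure_PiM_pair_events_common_node[OF prob_space_N space_N, of s "{..<n}" a b,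
        OF _ _ _ _ _ _ sets_R] assms by simp
  then show ?thesis using \<open>q \<ge> 0\<close> by (simp add: P.emeasure_eq_measure)
qed

lemma prob_edge_events_inter_le:
  assumes e: "e \<in> index_pairs n" "e' \<in> index_pairs n"
    and q: "(\<integral>\<^sup>+u. emeasure N (Pair u -` R) ^ 2 \<partial>N) \<le> ennreal q" "q \<ge> 0"
  shows "P.prob (edge_event e \<inter> edge_event e') \<le> (if e = e' then edge_prob else 0) + edge_prob ^ 2
           + (if e \<noteq> e' \<and> {fst e, snd e} \<inter> {fst e', snd e'} \<noteq> {} then q else 0)"
proof -
  obtain i j k l where ij: "e = (i, j)" "e' = (k, l)" "i < j" "j < n" "k < l" "l < n"
    using e by (auto simp: index_pairs_def)
  consider (equal) "e = e'" | (disjoint) "e \<noteq> e'" "{i, j} \<inter> {k, l} = {}"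
    | (overlapping) "e \<noteq> e'" "{i, j} \<inter> {k, l} \<noteq> {}"
    by blast
  then show ?thesis
  proof cases
    case equal
    then show ?thesis using prob_edge_event[OF e(1)] by simp
  next
    case disjoint
    then show ?thesis using prob_disjoint_edge_events[of i j k l] e ij by simp
  next
    case overlapping
    then consider "i = k" "j \<noteq> l" | "i = l" | "j = k" | "j = l" "i \<noteq> k"
      using ij by auto
    then have "P.prob (edge_event e \<inter> edge_event e') \<le> q"
    proof cases
      case 1
      then show ?thesis using ij q by (auto intro: prob_edge_events_common_node_le)
    next
      case 2
      then have "edge_event e \<inter> edge_event e' = edge_event (i, j) \<inter> edge_event (i, k)"
        using ij edge_event_swap[of k l] by simp
      then show ?thesis using 2 ij q by (auto intro: prob_edge_events_common_node_le)
    next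
      case 3
      then have "edge_event e \<inter> edge_event e' = edge_event (j, i) \<inter> edge_event (j, l)"
        using ij edge_event_swap[of i j] by simp
      then show ?thesis using 3 ij q by (auto intro: prob_edge_events_common_node_le)
    next
      case 4
      then have "edge_event e \<inter> edge_event e' = edge_event (j, i) \<inter> edge_event (j, k)"
        using ij edge_event_swap[of i j] edge_event_swap[of k l] by simp
      then show ?thesis using 4 ij q by (auto intro: prob_edge_events_common_node_le)
    qed
    have "0 \<le> edge_prob" by (simp add: edge_prob_def)
    with \<open>P.prob (edge_event e \<inter> edge_event e') \<le> q\<close> overlapping ij show ?thesis
      by (simp add: add_increasing)
  qed
qed

lemma edge_count_eq_sum_indicator:
  assumes "\<omega> \<in> space (PiM {..<n} (\<lambda>_. N))"
  shows "real (edge_count R n \<omega>) = (\<Sum>e\<in>index_pairs n. indicator (edge_event e) \<omega>)"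
proof -
  have "{(i, j). i < j \<and> j < n \<and> (\<omega> i, \<omega> j) \<in> R} = {e \<in> index_pairs n. \<omega> \<in> edge_event e}"
    using assms by (auto simp: index_pairs_def edge_event_def)
  then show ?thesis
    by (simp add: edge_count_def indicator_def of_nat_sum sum.If_cases Int_def)
qed

lemma integrable_indicator_event:
  "A \<in> P.events \<Longrightarrow> integrable (PiM {..<n} (\<lambda>_. N)) (indicator A :: _ \<Rightarrow> real)"
  by (intro integrable_real_indicator) (simp_all add: P.emeasure_eq_measure)

lemma expectation_edge_count:
  "P.expectation (\<lambda>\<omega>. real (edge_count R n \<omega>)) = real (card (index_pairs n)) * edge_prob"
proof -
  have "P.expectation (\<lambda>\<omega>. real (edge_count R n \<omega>))
      = P.expectation (\<lambda>\<omega>. \<Sum>e\<in>index_pairs n. indicator (edge_event e) \<omega>)"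
    by (intro Bochner_Integration.integral_cong) (simp_all add: edge_count_eq_sum_indicator)
  also have "\<dots> = (\<Sum>e\<in>index_pairs n. P.prob (edge_event e))"
    using integrable_indicator_event edge_event_sets
    by (simp add: Bochner_Integration.integral_sum)
  finally show ?thesis by (simp add: prob_edge_event)
qed

lemma second_moment_edge_count:
  assumes q: "(\<integral>\<^sup>+u. emeasure N (Pair u -` R) ^ 2 \<partial>N) \<le> ennreal q" "q \<ge> 0"
  shows "P.expectation (\<lambda>\<omega>. real (edge_count R n \<omega>) ^ 2)
    \<le> real (card (index_pairs n)) * edge_prob + (real (card (index_pairs n)) * edge_prob) ^ 2
       + 4 * real n ^ 3 * q"
proof -
  define PP where "PP = index_pairs n"
  define m where "m = real (card PP)"
  define Sh where "Sh = {(e, e'). e \<in> PP \<and> e' \<in> PP \<and> {fst e, snd e} \<inter> {fst e', snd e'} \<noteq> {}}"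
  have "P.expectation (\<lambda>\<omega>. real (edge_count R n \<omega>) ^ 2)
      = P.expectation (\<lambda>\<omega>. \<Sum>e\<in>PP. \<Sum>e'\<in>PP. indicator (edge_event e \<inter> edge_event e') \<omega>)"
    by (intro Bochner_Integration.integral_cong)
       (simp_all add: edge_count_eq_sum_indicator power2_eq_square sum_product indicator_inter_arith PP_def)
  also have "\<dots> = (\<Sum>e\<in>PP. \<Sum>e'\<in>PP. P.prob (edge_event e \<inter> edge_event e'))"
    using integrable_indicator_event edge_event_sets
    by (simp add: Bochner_Integration.integral_sum PP_def)
  also have "\<dots> \<le> (\<Sum>e\<in>PP. \<Sum>e'\<in>PP. ((if e = e' then edge_prob else 0) + edge_prob ^ 2)
      + (if (e, e') \<in> Sh then q else 0))"
  proof (intro sum_mono)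
    fix e e' assume "e \<in> PP" "e' \<in> PP"
    moreover have "(if e \<noteq> e' \<and> {fst e, snd e} \<inter> {fst e', snd e'} \<noteq> {} then q else 0)
        \<le> (if (e, e') \<in> Sh then q else 0)"
      using calculation q(2) by (auto simp: Sh_def)
    ultimately show "P.prob (edge_event e \<inter> edge_event e')
        \<le> ((if e = e' then edge_prob else 0) + edge_prob ^ 2) + (if (e, e') \<in> Sh then q else 0)"
      using prob_edge_events_inter_le[OF _ _ q, of e e'] by (simp add: PP_def)
  qed
  also have "\<dots> = m * edge_prob + (m * edge_prob) ^ 2 + real (card Sh) * q"
  proof -
    have "(\<Sum>e\<in>PP. \<Sum>e'\<in>PP. if (e, e') \<in> Sh then q else 0) = (\<Sum>x\<in>PP \<times> PP. if x \<in> Sh then q else 0)"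
      by (simp add: sum.cartesian_product)
    also have "\<dots> = (\<Sum>x\<in>{x \<in> PP \<times> PP. x \<in> Sh}. q)"
      by (rule sum.inter_filter[symmetric]) (simp add: PP_def)
    also have "{x \<in> PP \<times> PP. x \<in> Sh} = Sh"
      by (auto simp: Sh_def)
    finally have "(\<Sum>e\<in>PP. \<Sum>e'\<in>PP. if (e, e') \<in> Sh then q else 0) = real (card Sh) * q"
      by simp
    moreover have "(\<Sum>e\<in>PP. \<Sum>e'\<in>PP. (if e = e' then edge_prob else 0) + edge_prob ^ 2)
        = m * edge_prob + (m * edge_prob) ^ 2"
      by (simp add: sum.distrib m_def power2_eq_square PP_def algebra_simps)
    ultimately show ?thesis by (simp add: sum.distrib)
  qed
  also have "real (card Sh) * q \<le> 4 * real n ^ 3 * q"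
  proof -
    have "real (card Sh) \<le> real (4 * n ^ 3)"
      using card_overlapping_index_pairs[of n] unfolding Sh_def PP_def of_nat_le_iff .
    then show ?thesis using q(2) by (simp add: mult_right_mono)
  qed
  finally show ?thesis by (simp add: m_def PP_def)
qed

lemma integrable_edge_count:
  "integrable (PiM {..<n} (\<lambda>_. N)) (\<lambda>\<omega>. real (edge_count R n \<omega>))"
  "integrable (PiM {..<n} (\<lambda>_. N)) (\<lambda>\<omega>. real (edge_count R n \<omega>) ^ 2)"
proof -
  have sum: "integrable (PiM {..<n} (\<lambda>_. N)) (\<lambda>\<omega>. \<Sum>e\<in>index_pairs n. indicator (edge_event e) \<omega> :: real)"
    using integrable_indicator_event edge_event_sets by auto
  have "integrable (PiM {..<n} (\<lambda>_. N))
      (\<lambda>\<omega>. \<Sum>e\<in>index_pairs n. \<Sum>e'\<in>index_pairs n. indicator (edge_event e \<inter> edge_event e') \<omega> :: real)"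
    using integrable_indicator_event edge_event_sets by auto
  then have sq: "integrable (PiM {..<n} (\<lambda>_. N)) (\<lambda>\<omega>. (\<Sum>e\<in>index_pairs n. indicator (edge_event e) \<omega> :: real) ^ 2)"
    by (simp add: power2_eq_square sum_product indicator_inter_arith)
  show "integrable (PiM {..<n} (\<lambda>_. N)) (\<lambda>\<omega>. real (edge_count R n \<omega>))"
    using sum by (subst Bochner_Integration.integrable_cong[OF refl edge_count_eq_sum_indicator])
  show "integrable (PiM {..<n} (\<lambda>_. N)) (\<lambda>\<omega>. real (edge_count R n \<omega>) ^ 2)"
    using sq by (subst Bochner_Integration.integrable_cong[OF refl]) (simp_all add: edge_count_eq_sum_indicator)
qed

lemma variance_edge_count_le:
  assumes "(\<integral>\<^sup>+u. emeasure N (Pair u -` R) ^ 2 \<partial>N) \<le> ennreal q" "q \<ge> 0"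
  shows "P.variance (\<lambda>\<omega>. real (edge_count R n \<omega>))
    \<le> real (card (index_pairs n)) * edge_prob + 4 * real n ^ 3 * q"
  using P.variance_eq[OF integrable_edge_count] expectation_edge_count second_moment_edge_count[OF assms]
  by simp

lemma edge_count_concentration:
  assumes q: "(\<integral>\<^sup>+u. emeasure N (Pair u -` R) ^ 2 \<partial>N) \<le> ennreal q" "q \<ge> 0"
    and pos: "0 < real (card (index_pairs n)) * edge_prob"
    and lo: "lo \<le> real (card (index_pairs n)) * edge_prob / 2"
    and hi: "3 * (real (card (index_pairs n)) * edge_prob) / 2 \<le> hi"
  shows "1 - 4 * (real (card (index_pairs n)) * edge_prob + 4 * real n ^ 3 * q)
              / (real (card (index_pairs n)) * edge_prob) ^ 2
    \<le> P.prob {\<omega> \<in> space (PiM {..<n} (\<lambda>_. N)). lo \<le> real (edge_count R n \<omega>) \<and> real (edge_count R n \<omega>) \<le> hi}"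
proof -
  define \<mu> where "\<mu> = real (card (index_pairs n)) * edge_prob"
  let ?X = "\<lambda>\<omega>. real (edge_count R n \<omega>)" and ?M = "PiM {..<n} (\<lambda>_. N)"
  have [measurable]: "?X \<in> borel_measurable ?M"
    using integrable_edge_count(1) by (rule borel_measurable_integrable)
  have "P.prob {\<omega> \<in> space ?M. \<mu> / 2 \<le> \<bar>?X \<omega> - \<mu>\<bar>} \<le> P.variance ?X / (\<mu> / 2) ^ 2"
    using P.Chebyshev_inequality[OF _ integrable_edge_count(2), of "\<mu> / 2"] pos expectation_edge_count
    by (simp add: \<mu>_def)
  also have "\<dots> = 4 * P.variance ?X / \<mu> ^ 2"
    by (simp add: power_divide)
  also have "\<dots> \<le> 4 * (\<mu> + 4 * real n ^ 3 * q) / \<mu> ^ 2"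
    using variance_edge_count_le[OF q] by (intro divide_right_mono) (auto simp: \<mu>_def)
  finally have bad: "P.prob {\<omega> \<in> space ?M. \<mu> / 2 \<le> \<bar>?X \<omega> - \<mu>\<bar>} \<le> 4 * (\<mu> + 4 * real n ^ 3 * q) / \<mu> ^ 2" .
  have "1 - P.prob {\<omega> \<in> space ?M. \<mu> / 2 \<le> \<bar>?X \<omega> - \<mu>\<bar>} = P.prob {\<omega> \<in> space ?M. \<not> \<mu> / 2 \<le> \<bar>?X \<omega> - \<mu>\<bar>}"
    by (subst P.prob_neg) auto
  also have "\<dots> \<le> P.prob {\<omega> \<in> space ?M. lo \<le> ?X \<omega> \<and> ?X \<omega> \<le> hi}"
  proof -
    have "lo \<le> \<mu> / 2" "3 * \<mu> / 2 \<le> hi" using lo hi by (simp_all add: \<mu>_def)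
    then show ?thesis by (intro P.finite_measure_mono) (auto simp: abs_if split: if_splits)
  qed
  finally show ?thesis using bad by (simp add: \<mu>_def)
qed

end

section \<open>Toric geometry\<close>

lemma One_vec_nth[simp]: "(One :: real^'d) $ i = 1"
  by (simp add: cart_eq_inner_axis axis_in_Basis_iff)

lemma sum_Basis_vec_nth[simp]: "(\<Sum>x\<in>(Basis :: (real^'d) set). x $ i) = 1"
  using One_vec_nth[of i] by simp

lemma emeasure_lborel_cube:
  fixes a :: "real^'d"
  assumes "t \<ge> 0"
  shows "emeasure lborel (cbox a (a + t *\<^sub>R One)) = ennreal (t ^ CARD('d))"
proof -
  have "\<forall>b\<in>Basis. a \<bullet> b \<le> (a + t *\<^sub>R One) \<bullet> b" using assms by (auto simp: inner_add_left)
  then have "emeasure lborel (cbox a (a + t *\<^sub>R One)) = (\<Prod>b\<in>(Basis::(real^'d) set). ((a + t *\<^sub>R One) - a) \<bullet> b)"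
    by (simp add: emeasure_lborel_cbox_eq)
  also have "(\<Prod>b\<in>(Basis::(real^'d) set). ((a + t *\<^sub>R One) - a) \<bullet> b) = (\<Prod>b\<in>(Basis::(real^'d) set). t)"
  proof -
    have "(a + t *\<^sub>R One) - a = t *\<^sub>R (One::real^'d)" by (simp add: vec_eq_iff)
    then show ?thesis by (intro prod.cong) (auto simp: inner_sum_Basis)
  qed
  finally show ?thesis by simp
qed

lemma emeasure_lborel_centred_cube:
  fixes a :: "real^'d"
  assumes "r \<ge> 0"
  shows "emeasure lborel (cbox (a - r *\<^sub>R One) (a + r *\<^sub>R One)) = ennreal ((2 * r) ^ CARD('d))"
proof -
  have "a + r *\<^sub>R One = (a - r *\<^sub>R One) + (2 * r) *\<^sub>R One" by (simp add: vec_eq_iff)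
  then have "emeasure lborel (cbox (a - r *\<^sub>R One) (a + r *\<^sub>R One))
      = emeasure lborel (cbox (a - r *\<^sub>R One) ((a - r *\<^sub>R One) + (2 * r) *\<^sub>R One))"
    by (simp only:)
  also have "\<dots> = ennreal ((2 * r) ^ CARD('d))" using assms by (intro emeasure_lborel_cube) simp
  finally show ?thesis .
qed

definition torus_shifts :: "(real^'d) set" where
  "torus_shifts = {s. \<forall>i. s $ i \<in> {-1, 0, 1}}"

lemma finite_torus_shifts: "finite (torus_shifts :: (real^'d::finite) set)"
proof -
  have "torus_shifts \<subseteq> vec_lambda ` (PiE UNIV (\<lambda>_::'d. {-1, 0, 1::real}))"
  proof
    fix s :: "real^'d" assume "s \<in> torus_shifts"
    then have "s = vec_lambda (\<lambda>i. s $ i)" "(\<lambda>i. s $ i) \<in> PiE UNIV (\<lambda>_. {-1, 0, 1})"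
      by (auto simp: torus_shifts_def)
    then show "s \<in> vec_lambda ` (PiE UNIV (\<lambda>_::'d. {-1, 0, 1::real}))" by blast
  qed
  then show ?thesis by (rule finite_subset) (intro finite_imageI finite_PiE, auto)
qed

lemma toric_dist_sym: "toric_dist x y = toric_dist y x"
  unfolding toric_dist_def by (simp add: abs_minus_commute)

lemma toric_dist_nonneg: "toric_dist x y \<ge> 0"
  unfolding toric_dist_def by (simp add: sum_nonneg)

lemma borel_measurable_toric_dist[measurable]:
  "(\<lambda>(x::real^'d::finite, y). toric_dist x y) \<in> borel_measurable (borel \<Otimes>\<^sub>M borel)"
  "(\<lambda>y::real^'d. toric_dist x y) \<in> borel_measurable borel"
proof -
  have [measurable]: "(\<lambda>x::real^'d. x $ i) \<in> borel_measurable borel" for i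
    by (intro borel_measurable_continuous_onI continuous_intros)
  show "(\<lambda>(x::real^'d::finite, y). toric_dist x y) \<in> borel_measurable (borel \<Otimes>\<^sub>M borel)"
    "(\<lambda>y::real^'d. toric_dist x y) \<in> borel_measurable borel"
    unfolding toric_dist_def by measurable
qed

lemma abs_toric_coord_le_toric_dist:
  "abs (min \<bar>x $ i - y $ i\<bar> (1 - \<bar>x $ i - y $ i\<bar>)) \<le> toric_dist x y"
proof -
  have "(min \<bar>x $ i - y $ i\<bar> (1 - \<bar>x $ i - y $ i\<bar>))\<^sup>2
      \<le> (\<Sum>j\<in>UNIV. (min \<bar>x $ j - y $ j\<bar> (1 - \<bar>x $ j - y $ j\<bar>))\<^sup>2)"
    by (intro member_le_sum) auto
  then have "sqrt ((min \<bar>x $ i - y $ i\<bar> (1 - \<bar>x $ i - y $ i\<bar>))\<^sup>2) \<le> toric_dist x y"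
    unfolding toric_dist_def by (rule real_sqrt_le_mono)
  then show ?thesis by simp
qed

lemma toric_dist_le_imp_mem_shifted_cube:
  fixes x y :: "real^'d"
  assumes x: "x \<in> cbox 0 One" and y: "y \<in> cbox 0 One" and d: "toric_dist x y \<le> r"
  shows "\<exists>s\<in>torus_shifts. y \<in> cbox (x + s - r *\<^sub>R One) (x + s + r *\<^sub>R One)"
proof -
  define s :: "real^'d" where
    "s = (\<chi> i. if \<bar>x $ i - y $ i\<bar> \<le> r then 0 else if y $ i > x $ i then 1 else -1)"
  have xi: "0 \<le> x $ i" "x $ i \<le> 1" and yi: "0 \<le> y $ i" "y $ i \<le> 1" for i
    using x y by (auto simp: mem_box_cart)
  have coord: "min \<bar>x $ i - y $ i\<bar> (1 - \<bar>x $ i - y $ i\<bar>) \<le> r" for i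
    using abs_toric_coord_le_toric_dist[of x i y] d xi[of i] yi[of i] by auto
  have "(x + s - r *\<^sub>R One) $ i \<le> y $ i \<and> y $ i \<le> (x + s + r *\<^sub>R One) $ i" for i
    using coord[of i] xi[of i] yi[of i] by (auto simp: s_def abs_if split: if_splits)
  then have "y \<in> cbox (x + s - r *\<^sub>R One) (x + s + r *\<^sub>R One)"
    unfolding mem_box_cart by blast
  moreover have "s \<in> torus_shifts" by (auto simp: torus_shifts_def s_def)
  ultimately show ?thesis by blast
qed

lemma emeasure_toric_ball_le:
  fixes x :: "real^'d"
  assumes x: "x \<in> cbox 0 One" and r: "r \<ge> 0"
  shows "emeasure lborel {y \<in> cbox 0 One. toric_dist x y \<le> r}
    \<le> ennreal (real (card (torus_shifts :: (real^'d) set)) * (2 * r) ^ CARD('d))"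
proof -
  define B where "B s = cbox (x + s - r *\<^sub>R One) (x + s + r *\<^sub>R One)" for s :: "real^'d"
  have "{y \<in> cbox 0 One. toric_dist x y \<le> r} \<subseteq> (\<Union>s\<in>torus_shifts. B s)"
    using toric_dist_le_imp_mem_shifted_cube[OF x] by (auto simp: B_def)
  then have "emeasure lborel {y \<in> cbox 0 One. toric_dist x y \<le> r} \<le> emeasure lborel (\<Union>s\<in>torus_shifts. B s)"
    by (intro emeasure_mono sets.finite_UN finite_torus_shifts) (auto simp: B_def)
  also have "\<dots> \<le> (\<Sum>s\<in>torus_shifts. emeasure lborel (B s))"
    by (intro emeasure_subadditive_finite finite_torus_shifts) (auto simp: B_def)
  also have "\<dots> = (\<Sum>s\<in>(torus_shifts :: (real^'d) set). ennreal ((2 * r) ^ CARD('d)))"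
    by (intro sum.cong refl) (simp add: B_def emeasure_lborel_centred_cube[OF r])
  also have "\<dots> = ennreal (real (card (torus_shifts :: (real^'d) set)) * (2 * r) ^ CARD('d))"
    using r by (simp add: ennreal_of_nat_eq_real_of_nat ennreal_mult)
  finally show ?thesis .
qed

lemma emeasure_toric_ball_ge:
  fixes x :: "real^'d"
  assumes x: "x \<in> cbox 0 One" and t: "0 \<le> t" "t \<le> 1 / 2"
  shows "ennreal (t ^ CARD('d)) \<le> emeasure lborel {y \<in> cbox 0 One. toric_dist x y \<le> sqrt CARD('d) * t}"
proof -
  define a :: "real^'d" where "a = (\<chi> i. if x $ i \<ge> t then x $ i - t else x $ i)"
  have xi: "0 \<le> x $ i" "x $ i \<le> 1" for i using x by (auto simp: mem_box_cart)
  have "cbox a (a + t *\<^sub>R One) \<subseteq> {y \<in> cbox 0 One. toric_dist x y \<le> sqrt CARD('d) * t}"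
  proof safe
    fix y assume "y \<in> cbox a (a + t *\<^sub>R One)"
    then have y: "a $ i \<le> y $ i" "y $ i \<le> a $ i + t" for i by (auto simp: mem_box_cart)
    have "0 \<le> y $ i \<and> y $ i \<le> 1" for i
      using y[of i] xi[of i] t by (cases "t \<le> x $ i") (auto simp: a_def)
    then show "y \<in> cbox 0 One" by (simp add: mem_box_cart)
    have close: "\<bar>x $ i - y $ i\<bar> \<le> t" for i using y[of i] by (auto simp: a_def split: if_splits)
    have "(\<Sum>i\<in>UNIV. (min \<bar>x $ i - y $ i\<bar> (1 - \<bar>x $ i - y $ i\<bar>))\<^sup>2) \<le> (\<Sum>i\<in>(UNIV::'d set). t\<^sup>2)"
    proof (intro sum_mono)
      fix i
      have "min \<bar>x $ i - y $ i\<bar> (1 - \<bar>x $ i - y $ i\<bar>) = \<bar>x $ i - y $ i\<bar>"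
        using close[of i] t by auto
      then show "(min \<bar>x $ i - y $ i\<bar> (1 - \<bar>x $ i - y $ i\<bar>))\<^sup>2 \<le> t\<^sup>2"
        using power_mono[OF close[of i] abs_ge_zero, of 2] by simp
    qed
    then have "toric_dist x y \<le> sqrt (real CARD('d) * t\<^sup>2)"
      unfolding toric_dist_def by (intro real_sqrt_le_mono) simp
    then show "toric_dist x y \<le> sqrt CARD('d) * t"
      using t by (simp add: real_sqrt_mult)
  qed
  then have "emeasure lborel (cbox a (a + t *\<^sub>R One))
      \<le> emeasure lborel {y \<in> cbox 0 One. toric_dist x y \<le> sqrt CARD('d) * t}"
    by (intro emeasure_mono) measurable
  then show ?thesis unfolding emeasure_lborel_cube[OF t(1), of a] .
qed

definition cube_measure :: "(real^'d::finite) measure" where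
  "cube_measure = uniform_measure lborel (cbox 0 One)"

definition weight_measure :: "(real \<Rightarrow> real) \<Rightarrow> real measure" where
  "weight_measure f = density lborel (\<lambda>x. ennreal (f x))"

lemma node_measure_eq: "node_measure f = cube_measure \<Otimes>\<^sub>M weight_measure f"
  by (simp add: node_measure_def cube_measure_def weight_measure_def)

lemma emeasure_lborel_unit_cube: "emeasure lborel (cbox 0 (One :: real^'d::finite)) = 1"
  using emeasure_lborel_cube[of 1 "0::real^'d"] by simp

lemma prob_space_cube_measure: "prob_space (cube_measure :: (real^'d::finite) measure)"
  unfolding cube_measure_def
  by (intro prob_space_uniform_measure) (simp_all add: emeasure_lborel_unit_cube)

lemma sets_cube_measure[measurable_cong]: "sets (cube_measure :: (real^'d::finite) measure) = sets borel"
  by (simp add: cube_measure_def)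

lemma space_cube_measure[simp]: "space (cube_measure :: (real^'d::finite) measure) = UNIV"
  by (simp add: cube_measure_def)

lemma emeasure_cube_measure:
  "S \<in> sets borel \<Longrightarrow> emeasure (cube_measure :: (real^'d::finite) measure) S = emeasure lborel (cbox 0 One \<inter> S)"
  by (simp add: cube_measure_def emeasure_lborel_unit_cube divide_ennreal_def)

lemma AE_cube_measure: "AE x in (cube_measure :: (real^'d::finite) measure). x \<in> cbox 0 One"
  unfolding cube_measure_def by (intro AE_uniform_measureI) auto

lemma sets_weight_measure[measurable_cong]: "sets (weight_measure f) = sets borel"
  by (simp add: weight_measure_def)

lemma space_weight_measure[simp]: "space (weight_measure f) = UNIV"
  by (simp add: weight_measure_def)

lemma sets_node_measure[measurable_cong]:
  "sets (node_measure f :: ((real^'d::finite) \<times> real) measure) = sets (borel \<Otimes>\<^sub>M borel)"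
  unfolding node_measure_def by (intro sets_pair_measure_cong) auto

lemma space_node_measure[simp]: "space (node_measure f :: ((real^'d::finite) \<times> real) measure) = UNIV"
  unfolding node_measure_def by (simp add: space_pair_measure)

definition adjacency :: "real \<Rightarrow> (((real^'d::finite) \<times> real) \<times> ((real^'d) \<times> real)) set" where
  "adjacency \<theta> = {(u, v). \<theta> \<le> (snd u + snd v) / toric_dist (fst u) (fst v) ^ CARD('d)}"

lemma gtg_edges_eq_edge_count: "gtg_edges \<theta> n \<omega> = edge_count (adjacency \<theta>) n \<omega>"
  by (simp add: gtg_edges_def edge_count_def gtg_adj_def adjacency_def)

lemma adjacency_sym: "(u, v) \<in> adjacency \<theta> \<Longrightarrow> (v, u) \<in> adjacency \<theta>"
  by (simp add: adjacency_def toric_dist_sym add.commute)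

lemma sets_adjacency:
  "(adjacency \<theta> :: (((real^'d::finite) \<times> real) \<times> _) set) \<in> sets (node_measure f \<Otimes>\<^sub>M node_measure f)"
proof -
  have "adjacency \<theta> = {z \<in> space ((node_measure f :: ((real^'d) \<times> real) measure) \<Otimes>\<^sub>M node_measure f).
      \<theta> \<le> (snd (fst z) + snd (snd z)) / toric_dist (fst (fst z)) (fst (snd z)) ^ CARD('d)}"
    by (auto simp: adjacency_def space_pair_measure)
  also have "\<dots> \<in> sets ((node_measure f :: ((real^'d) \<times> real) measure) \<Otimes>\<^sub>M node_measure f)"
    by measurable
  finally show ?thesis .
qed

lemma sets_adjacent_positions:
  "{y. ((x, w0), (y, w)) \<in> (adjacency \<theta> :: (((real^'d::finite) \<times> real) \<times> _) set)} \<in> sets borel"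
proof -
  have "{y. ((x, w0), (y, w)) \<in> (adjacency \<theta> :: (((real^'d) \<times> real) \<times> _) set)}
      = {y \<in> space borel. \<theta> \<le> (w0 + w) / toric_dist x y ^ CARD('d)}"
    by (simp add: adjacency_def)
  also have "\<dots> \<in> sets borel" by measurable
  finally show ?thesis .
qed

definition toric_ball_const :: "'d::finite itself \<Rightarrow> real" where
  "toric_ball_const _ = real (card (torus_shifts :: (real^'d) set)) * 2 ^ CARD('d)"

lemma toric_ball_const_nonneg: "toric_ball_const TYPE('d::finite) \<ge> 0"
  by (simp add: toric_ball_const_def)

lemma emeasure_adjacent_positions_le:
  assumes \<theta>: "\<theta> > 0" and x: "x \<in> cbox 0 (One :: real^'d::finite)"
  shows "emeasure (cube_measure :: (real^'d) measure) {y. ((x, w0), (y, w)) \<in> adjacency \<theta>}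
    \<le> ennreal (toric_ball_const TYPE('d) * (max 0 (w0 + w) / \<theta>))"
proof -
  define r where "r = root CARD('d) (max 0 (w0 + w) / \<theta>)"
  have r: "r \<ge> 0" "r ^ CARD('d) = max 0 (w0 + w) / \<theta>"
    unfolding r_def using \<theta> by (simp_all add: real_root_pow_pos2)
  have "cbox 0 One \<inter> {y. ((x, w0), (y, w)) \<in> adjacency \<theta>} \<subseteq> {y \<in> cbox 0 One. toric_dist x y \<le> r}"
  proof safe
    fix y assume adj: "((x, w0), (y, w)) \<in> (adjacency \<theta> :: (((real^'d) \<times> real) \<times> _) set)"
    have "\<theta> * toric_dist x y ^ CARD('d) \<le> max 0 (w0 + w)"
    proof (cases "toric_dist x y = 0")
      case False
      then have "toric_dist x y ^ CARD('d) > 0" using toric_dist_nonneg[of x y] by simp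
      with adj show ?thesis by (simp add: adjacency_def le_divide_eq)
    qed (simp add: power_0_left)
    then have "toric_dist x y ^ CARD('d) \<le> r ^ CARD('d)"
      using \<theta> r(2) by (simp add: le_divide_eq mult.commute)
    then show "toric_dist x y \<le> r"
      using r(1) toric_dist_nonneg[of x y] by simp
  qed
  then have "emeasure (cube_measure :: (real^'d) measure) {y. ((x, w0), (y, w)) \<in> adjacency \<theta>}
      \<le> emeasure lborel {y \<in> cbox 0 One. toric_dist x y \<le> r}"
    unfolding emeasure_cube_measure[OF sets_adjacent_positions] by (rule emeasure_mono) measurable
  also have "\<dots> \<le> ennreal (real (card (torus_shifts :: (real^'d) set)) * (2 * r) ^ CARD('d))"
    by (rule emeasure_toric_ball_le[OF x r(1)])
  also have "\<dots> = ennreal (toric_ball_const TYPE('d) * (max 0 (w0 + w) / \<theta>))"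
    using r(2) by (simp add: toric_ball_const_def power_mult_distrib mult.assoc)
  finally show ?thesis .
qed

lemma emeasure_adjacent_positions_ge:
  assumes \<theta>: "\<theta> > 0" and x: "x \<in> cbox 0 (One :: real^'d::finite)"
    and t: "0 \<le> t" "t \<le> 1 / 2" and close: "\<theta> * (sqrt CARD('d) * t) ^ CARD('d) \<le> w0 + w"
  shows "ennreal (t ^ CARD('d)) \<le> emeasure (cube_measure :: (real^'d) measure) {y. ((x, w0), (y, w)) \<in> adjacency \<theta>}"
proof -
  let ?S = "{y. ((x, w0), (y, w)) \<in> (adjacency \<theta> :: (((real^'d) \<times> real) \<times> _) set)}"
  \<comment> \<open>points at toric distance 0 are not adjacent, as \<open>(w\<^sub>0 + w) / 0 = 0 < \<theta>\<close>; they form a null set\<close>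
  let ?Z = "{y \<in> cbox 0 One. toric_dist x y \<le> 0}"
  have cover: "{y \<in> cbox 0 One. toric_dist x y \<le> sqrt CARD('d) * t} \<subseteq> (cbox 0 One \<inter> ?S) \<union> ?Z"
  proof (intro subsetI)
    fix y assume y: "y \<in> {y \<in> cbox 0 One. toric_dist x y \<le> sqrt CARD('d) * t}"
    show "y \<in> (cbox 0 One \<inter> ?S) \<union> ?Z"
    proof (cases "toric_dist x y \<le> 0")
      case False
      have "\<theta> * toric_dist x y ^ CARD('d) \<le> \<theta> * (sqrt CARD('d) * t) ^ CARD('d)"
        using y \<theta> toric_dist_nonneg by (intro mult_left_mono power_mono) auto
      with close False y show ?thesis
        by (simp add: adjacency_def le_divide_eq mult.commute)
    qed (use y in simp)
  qed
  have "emeasure lborel ?Z = 0"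
    using emeasure_toric_ball_le[OF x order.refl] by (simp add: power_0_left)
  have S: "cbox 0 One \<inter> ?S \<in> sets lborel"
    using sets_adjacent_positions[of x w0 w \<theta>] by (simp add: sets.Int)
  have Z: "?Z \<in> sets lborel" by measurable
  note emeasure_toric_ball_ge[OF x t]
  also have "emeasure lborel {y \<in> cbox 0 One. toric_dist x y \<le> sqrt CARD('d) * t}
      \<le> emeasure lborel ((cbox 0 One \<inter> ?S) \<union> ?Z)"
    using S Z by (intro emeasure_mono[OF cover] sets.Un)
  also have "\<dots> \<le> emeasure lborel (cbox 0 One \<inter> ?S) + emeasure lborel ?Z"
    using S Z by (rule emeasure_subadditive)
  also have "\<dots> = emeasure (cube_measure :: (real^'d) measure) ?S"
    using \<open>emeasure lborel ?Z = 0\<close> by (simp add: emeasure_cube_measure[OF sets_adjacent_positions])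
  finally show ?thesis .
qed

section \<open>Edge probability\<close>

locale weight_density =
  fixes f :: "real \<Rightarrow> real"
  assumes f_nonneg: "\<And>x. f x \<ge> 0"
    and f_supp: "\<And>x. x < 0 \<Longrightarrow> f x = 0"
    and f_int: "integrable lborel f"
    and f_total: "integral\<^sup>L lborel f = 1"
    and f_mean: "integrable lborel (\<lambda>x. x * f x)"
    and f_var: "integrable lborel (\<lambda>x. x\<^sup>2 * f x)"
begin

lemma borel_measurable_f[measurable]: "f \<in> borel_measurable borel"
  using f_int by (simp add: borel_measurable_integrable)

lemma prob_space_weight_measure: "prob_space (weight_measure f)"
proof (rule prob_spaceI)
  have "emeasure (weight_measure f) UNIV = (\<integral>\<^sup>+x. ennreal (f x) \<partial>lborel)"
    by (simp add: weight_measure_def emeasure_density)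
  also have "\<dots> = ennreal (integral\<^sup>L lborel f)"
    using f_int f_nonneg by (intro nn_integral_eq_integral) auto
  finally show "emeasure (weight_measure f) (space (weight_measure f)) = 1"
    using f_total by simp
qed

sublocale W: prob_space "weight_measure f"
  by (rule prob_space_weight_measure)

lemma prob_space_node_measure: "prob_space (node_measure f :: ((real^'d::finite) \<times> real) measure)"
  unfolding node_measure_eq by (intro prob_space_pair prob_space_cube_measure prob_space_weight_measure)

lemma AE_weight_measure_pos: "AE w in weight_measure f. w > 0"
proof -
  have "AE x in lborel. 0 < ennreal (f x) \<longrightarrow> x > 0"
    using AE_lborel_singleton[of 0]
  proof eventually_elim
    case (elim x)
    then show ?case using f_supp[of x] by (cases "x < 0") auto
  qed
  then show ?thesis unfolding weight_measure_def by (subst AE_density) auto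
qed

lemma integrable_weight_measure:
  fixes h :: "real \<Rightarrow> real"
  assumes "h \<in> borel_measurable borel" "integrable lborel (\<lambda>x. f x * h x)"
  shows "integrable (weight_measure f) h"
  unfolding weight_measure_def using assms f_nonneg by (subst integrable_density) auto

lemma integrable_abs_weight: "integrable (weight_measure f) (\<lambda>w. \<bar>w\<bar>)"
proof (rule integrable_weight_measure)
  have "integrable lborel (\<lambda>x. \<bar>x * f x\<bar>)" using f_mean by (rule integrable_abs)
  then show "integrable lborel (\<lambda>x. f x * \<bar>x\<bar>)"
    using f_nonneg by (simp add: abs_mult mult.commute)
qed measurable

lemma integrable_sq_weight: "integrable (weight_measure f) (\<lambda>w. w\<^sup>2)"
  using f_var by (intro integrable_weight_measure) (simp_all add: mult.commute)

lemma weight_tail_pos: "\<exists>w1>0. measure (weight_measure f) {w1..} > 0"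
proof (rule ccontr)
  assume "\<not> (\<exists>w1>0. measure (weight_measure f) {w1..} > 0)"
  have null: "{1 / real (Suc k)..} \<in> null_sets (weight_measure f)" for k
  proof -
    have "\<not> W.prob {1 / real (Suc k)..} > 0" using \<open>\<not> _\<close> by simp
    then have "W.prob {1 / real (Suc k)..} = 0"
      using measure_nonneg[of "weight_measure f" "{1 / real (Suc k)..}"] by linarith
    then show ?thesis by (simp add: null_sets_def W.emeasure_eq_measure)
  qed
  have "{0<..} = (\<Union>k. {1 / real (Suc k)..})"
  proof (intro equalityI subsetI)
    fix x :: real assume "x \<in> {0<..}"
    then obtain k where "1 / real (Suc k) < x"
      by (metis greaterThan_iff inverse_eq_divide reals_Archimedean of_nat_Suc add.commute)
    then show "x \<in> (\<Union>k. {1 / real (Suc k)..})" by (intro UN_I[of k]) auto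
  next
    fix x :: real assume "x \<in> (\<Union>k. {1 / real (Suc k)..})"
    then obtain k where "1 / real (Suc k) \<le> x" by auto
    then show "x \<in> {0<..}" using less_le_trans[of 0 "1 / real (Suc k)" x] by simp
  qed
  then have "{0<..} \<in> null_sets (weight_measure f)"
    using null by (simp add: null_sets_UN)
  then have "AE w in weight_measure f. w \<notin> {0<..}" by (rule AE_not_in)
  with AE_weight_measure_pos have "AE w in weight_measure f. False" by eventually_elim auto
  then show False by simp
qed

definition weight_mean :: real where
  "weight_mean = (\<integral>w. \<bar>w\<bar> \<partial>weight_measure f)"

definition weight_moment :: real where
  "weight_moment = (\<integral>w. (\<bar>w\<bar> + weight_mean)\<^sup>2 \<partial>weight_measure f)"

lemma weight_mean_nonneg: "weight_mean \<ge> 0"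
  unfolding weight_mean_def by simp

lemma weight_moment_nonneg: "weight_moment \<ge> 0"
  unfolding weight_moment_def by simp

lemma nn_integral_affine_abs_weight:
  assumes "a \<ge> 0" "b \<ge> 0"
  shows "(\<integral>\<^sup>+w. ennreal (a + b * \<bar>w\<bar>) \<partial>weight_measure f) = ennreal (a + b * weight_mean)"
  using assms integrable_abs_weight W.prob_space
  by (subst nn_integral_eq_integral) (auto simp: weight_mean_def)

lemma nn_integral_node_measure_snd:
  assumes [measurable]: "h \<in> borel_measurable borel"
  shows "(\<integral>\<^sup>+u. h (snd u) \<partial>(node_measure f :: ((real^'d::finite) \<times> real) measure))
       = (\<integral>\<^sup>+w. h w \<partial>weight_measure f)"
proof -
  interpret U: prob_space "cube_measure :: (real^'d) measure" by (rule prob_space_cube_measure)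
  interpret UW: pair_prob_space "cube_measure :: (real^'d) measure" "weight_measure f" ..
  have "(\<integral>\<^sup>+u. h (snd u) \<partial>((cube_measure :: (real^'d) measure) \<Otimes>\<^sub>M weight_measure f))
      = (\<integral>\<^sup>+w. (\<integral>\<^sup>+x. h (snd (x, w)) \<partial>(cube_measure :: (real^'d) measure)) \<partial>weight_measure f)"
    by (rule UW.nn_integral_snd[symmetric]) measurable
  then show ?thesis using U.emeasure_space_1 by (simp add: node_measure_eq)
qed

lemma AE_node_measure_in_cube:
  "AE u in (node_measure f :: ((real^'d::finite) \<times> real) measure). fst u \<in> cbox 0 One"
proof -
  interpret U: prob_space "cube_measure :: (real^'d) measure" by (rule prob_space_cube_measure)
  interpret UW: pair_prob_space "cube_measure :: (real^'d) measure" "weight_measure f" ..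
  show ?thesis unfolding node_measure_eq
    by (rule UW.AE_pair_measure) (auto intro!: AE_I2 simp: AE_cube_measure[THEN AE_mp])
qed

lemma sets_adjacency_Pair:
  "Pair u -` adjacency \<theta> \<in> sets (node_measure f :: ((real^'d::finite) \<times> real) measure)"
  by (rule sets_Pair1[OF sets_adjacency])

lemma emeasure_neighbourhood_eq:
  "emeasure (node_measure f :: ((real^'d::finite) \<times> real) measure) (Pair (x, w0) -` adjacency \<theta>)
    = (\<integral>\<^sup>+w. emeasure (cube_measure :: (real^'d) measure) {y. ((x, w0), (y, w)) \<in> adjacency \<theta>} \<partial>weight_measure f)"
proof -
  interpret U: prob_space "cube_measure :: (real^'d) measure" by (rule prob_space_cube_measure)
  interpret UW: pair_prob_space "cube_measure :: (real^'d) measure" "weight_measure f" ..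
  show ?thesis
    using UW.emeasure_pair_measure_alt2[OF sets_adjacency_Pair[of "(x, w0)" \<theta>, unfolded node_measure_eq]]
    by (simp add: node_measure_eq vimage_def)
qed

lemma emeasure_neighbourhood_le:
  assumes \<theta>: "\<theta> > 0" and x: "x \<in> cbox 0 (One :: real^'d::finite)"
  shows "emeasure (node_measure f :: ((real^'d) \<times> real) measure) (Pair (x, w0) -` adjacency \<theta>)
    \<le> ennreal (toric_ball_const TYPE('d) / \<theta> * \<bar>w0\<bar> + toric_ball_const TYPE('d) / \<theta> * weight_mean)"
proof -
  let ?C = "toric_ball_const TYPE('d)"
  have "(\<integral>\<^sup>+w. emeasure (cube_measure :: (real^'d) measure) {y. ((x, w0), (y, w)) \<in> adjacency \<theta>} \<partial>weight_measure f)
      \<le> (\<integral>\<^sup>+w. ennreal (?C / \<theta> * \<bar>w0\<bar> + ?C / \<theta> * \<bar>w\<bar>) \<partial>weight_measure f)"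
  proof (intro nn_integral_mono order.trans[OF emeasure_adjacent_positions_le[OF \<theta> x]] ennreal_leI)
    fix w
    have "?C * (max 0 (w0 + w) / \<theta>) \<le> ?C * ((\<bar>w0\<bar> + \<bar>w\<bar>) / \<theta>)"
      using \<theta> toric_ball_const_nonneg[where 'd='d] by (intro mult_left_mono divide_right_mono) auto
    also have "?C * ((\<bar>w0\<bar> + \<bar>w\<bar>) / \<theta>) = ?C / \<theta> * \<bar>w0\<bar> + ?C / \<theta> * \<bar>w\<bar>"
      by (simp add: add_divide_distrib algebra_simps)
    finally show "?C * (max 0 (w0 + w) / \<theta>) \<le> ?C / \<theta> * \<bar>w0\<bar> + ?C / \<theta> * \<bar>w\<bar>" .
  qed
  also have "\<dots> = ennreal (?C / \<theta> * \<bar>w0\<bar> + ?C / \<theta> * weight_mean)"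
    using \<theta> toric_ball_const_nonneg[where 'd='d] by (intro nn_integral_affine_abs_weight) auto
  finally show ?thesis by (simp add: emeasure_neighbourhood_eq)
qed

lemma measure_adjacency_le:
  assumes \<theta>: "\<theta> > 0"
  shows "measure (node_measure f \<Otimes>\<^sub>M node_measure f) (adjacency \<theta> :: (((real^'d::finite) \<times> real) \<times> _) set)
    \<le> 2 * toric_ball_const TYPE('d) * weight_mean / \<theta>"
proof -
  let ?C = "toric_ball_const TYPE('d)" and ?N = "node_measure f :: ((real^'d) \<times> real) measure"
  interpret N: prob_space ?N by (rule prob_space_node_measure)
  interpret NN: pair_prob_space ?N ?N ..
  have "emeasure (?N \<Otimes>\<^sub>M ?N) (adjacency \<theta>) = (\<integral>\<^sup>+u. emeasure ?N (Pair u -` adjacency \<theta>) \<partial>?N)"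
    by (rule N.emeasure_pair_measure_alt[OF sets_adjacency])
  also have "\<dots> \<le> (\<integral>\<^sup>+u. ennreal (?C / \<theta> * \<bar>snd u\<bar> + ?C / \<theta> * weight_mean) \<partial>?N)"
    using AE_node_measure_in_cube
  proof (rule nn_integral_mono_AE[OF AE_mp], intro AE_I2 impI)
    fix u :: "(real^'d) \<times> real" assume "fst u \<in> cbox 0 One"
    then show "emeasure ?N (Pair u -` adjacency \<theta>) \<le> ennreal (?C / \<theta> * \<bar>snd u\<bar> + ?C / \<theta> * weight_mean)"
      using emeasure_neighbourhood_le[OF \<theta>, of "fst u" "snd u"] by simp
  qed
  also have "\<dots> = (\<integral>\<^sup>+w. ennreal (?C / \<theta> * weight_mean + ?C / \<theta> * \<bar>w\<bar>) \<partial>weight_measure f)"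
    by (subst nn_integral_node_measure_snd) (simp_all add: add.commute)
  also have "\<dots> = ennreal (2 * ?C * weight_mean / \<theta>)"
    using \<theta> toric_ball_const_nonneg[where 'd='d] weight_mean_nonneg
    by (subst nn_integral_affine_abs_weight) (auto simp: field_simps)
  finally show ?thesis
    using \<theta> toric_ball_const_nonneg[where 'd='d] weight_mean_nonneg by (simp add: NN.P.emeasure_eq_measure)
qed

lemma nn_integral_neighbourhood_sq_le:
  assumes \<theta>: "\<theta> > 0"
  shows "(\<integral>\<^sup>+u. emeasure (node_measure f) (Pair u -` adjacency \<theta>) ^ 2
      \<partial>(node_measure f :: ((real^'d::finite) \<times> real) measure))
    \<le> ennreal ((toric_ball_const TYPE('d) / \<theta>)\<^sup>2 * weight_moment)"
proof -
  let ?C = "toric_ball_const TYPE('d)" and ?N = "node_measure f :: ((real^'d) \<times> real) measure"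
  have "(\<integral>\<^sup>+u. emeasure ?N (Pair u -` adjacency \<theta>) ^ 2 \<partial>?N)
      \<le> (\<integral>\<^sup>+u. ennreal ((?C / \<theta>)\<^sup>2 * (\<bar>snd u\<bar> + weight_mean)\<^sup>2) \<partial>?N)"
    using AE_node_measure_in_cube
  proof (rule nn_integral_mono_AE[OF AE_mp], intro AE_I2 impI)
    fix u :: "(real^'d) \<times> real" assume "fst u \<in> cbox 0 One"
    then have "emeasure ?N (Pair u -` adjacency \<theta>) ^ 2
        \<le> ennreal (?C / \<theta> * \<bar>snd u\<bar> + ?C / \<theta> * weight_mean) ^ 2"
      using emeasure_neighbourhood_le[OF \<theta>, of "fst u" "snd u"] by (intro power_mono) simp_all
    also have "\<dots> = ennreal ((?C / \<theta> * \<bar>snd u\<bar> + ?C / \<theta> * weight_mean) ^ 2)"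
      using \<theta> toric_ball_const_nonneg[where 'd='d] weight_mean_nonneg by (intro ennreal_power) simp
    also have "(?C / \<theta> * \<bar>snd u\<bar> + ?C / \<theta> * weight_mean) ^ 2 = (?C / \<theta>)\<^sup>2 * (\<bar>snd u\<bar> + weight_mean)\<^sup>2"
      by (simp add: power2_eq_square algebra_simps)
    finally show "emeasure ?N (Pair u -` adjacency \<theta>) ^ 2 \<le> ennreal ((?C / \<theta>)\<^sup>2 * (\<bar>snd u\<bar> + weight_mean)\<^sup>2)" .
  qed
  also have "\<dots> = (\<integral>\<^sup>+w. ennreal ((?C / \<theta>)\<^sup>2 * (\<bar>w\<bar> + weight_mean)\<^sup>2) \<partial>weight_measure f)"
    by (subst nn_integral_node_measure_snd) simp_all
  also have "\<dots> = ennreal ((?C / \<theta>)\<^sup>2 * weight_moment)"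
  proof -
    have "integrable (weight_measure f) (\<lambda>w. (\<bar>w\<bar> + weight_mean)\<^sup>2)"
      using integrable_sq_weight integrable_abs_weight
      by (simp add: power2_sum power2_abs)
    then show ?thesis by (subst nn_integral_eq_integral) (auto simp: weight_moment_def)
  qed
  finally show ?thesis .
qed

lemma emeasure_neighbourhood_ge:
  assumes \<theta>: "\<theta> > 0" and x: "x \<in> cbox 0 (One :: real^'d::finite)"
    and t: "0 \<le> t" "t \<le> 1 / 2" and w0: "\<theta> * (sqrt CARD('d) * t) ^ CARD('d) \<le> w0"
  shows "ennreal (t ^ CARD('d)) \<le> emeasure (node_measure f :: ((real^'d) \<times> real) measure) (Pair (x, w0) -` adjacency \<theta>)"
proof -
  have "ennreal (t ^ CARD('d)) = (\<integral>\<^sup>+w. ennreal (t ^ CARD('d)) \<partial>weight_measure f)"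
    using W.emeasure_space_1 by simp
  also have "\<dots> \<le> (\<integral>\<^sup>+w. emeasure (cube_measure :: (real^'d) measure) {y. ((x, w0), (y, w)) \<in> adjacency \<theta>} \<partial>weight_measure f)"
    using AE_weight_measure_pos
  proof (rule nn_integral_mono_AE[OF AE_mp], intro AE_I2 impI)
    fix w :: real assume "w > 0"
    with w0 have "\<theta> * (sqrt CARD('d) * t) ^ CARD('d) \<le> w0 + w" by simp
    then show "ennreal (t ^ CARD('d)) \<le> emeasure (cube_measure :: (real^'d) measure) {y. ((x, w0), (y, w)) \<in> adjacency \<theta>}"
      by (rule emeasure_adjacent_positions_ge[OF \<theta> x t])
  qed
  finally show ?thesis by (simp add: emeasure_neighbourhood_eq)
qed

lemma measure_adjacency_ge_heavy_nodes:
  assumes \<theta>: "\<theta> > 0" and t: "0 \<le> t" "t \<le> 1 / 2" and w1: "\<theta> * (sqrt CARD('d) * t) ^ CARD('d) \<le> w1"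
  shows "t ^ CARD('d) * measure (weight_measure f) {w1..}
    \<le> measure (node_measure f \<Otimes>\<^sub>M node_measure f) (adjacency \<theta> :: (((real^'d::finite) \<times> real) \<times> _) set)"
proof -
  let ?N = "node_measure f :: ((real^'d) \<times> real) measure"
  interpret N: prob_space ?N by (rule prob_space_node_measure)
  interpret NN: pair_prob_space ?N ?N ..
  define A where "A = cbox 0 (One :: real^'d) \<times> {w1..}"
  have A: "A \<in> sets ?N" unfolding A_def by measurable
  have "emeasure ?N A = emeasure (cube_measure :: (real^'d) measure) (cbox 0 One) * emeasure (weight_measure f) {w1..}"
    unfolding A_def node_measure_eq by (intro W.emeasure_pair_measure_Times) auto
  also have "emeasure (cube_measure :: (real^'d) measure) (cbox 0 One) = 1"
    by (simp add: emeasure_cube_measure emeasure_lborel_unit_cube)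
  finally have "ennreal (t ^ CARD('d) * measure (weight_measure f) {w1..}) = (\<integral>\<^sup>+u. ennreal (t ^ CARD('d)) * indicator A u \<partial>?N)"
    using A t by (simp add: nn_integral_cmult_indicator W.emeasure_eq_measure ennreal_mult)
  also have "\<dots> \<le> (\<integral>\<^sup>+u. emeasure ?N (Pair u -` adjacency \<theta>) \<partial>?N)"
  proof (intro nn_integral_mono)
    fix u :: "(real^'d) \<times> real"
    show "ennreal (t ^ CARD('d)) * indicator A u \<le> emeasure ?N (Pair u -` adjacency \<theta>)"
      using emeasure_neighbourhood_ge[OF \<theta> _ t order.trans[OF w1], of "fst u" "snd u"]
      by (cases "u \<in> A") (auto simp: A_def)
  qed
  also have "\<dots> = emeasure (?N \<Otimes>\<^sub>M ?N) (adjacency \<theta>)"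
    by (rule N.emeasure_pair_measure_alt[OF sets_adjacency, symmetric])
  finally show ?thesis by (simp add: NN.P.emeasure_eq_measure)
qed

lemma measure_adjacency_ge:
  "\<exists>\<kappa>>0. \<exists>\<theta>0>0. \<forall>\<theta>\<ge>\<theta>0.
    \<kappa> / \<theta> \<le> measure (node_measure f \<Otimes>\<^sub>M node_measure f) (adjacency \<theta> :: (((real^'d::finite) \<times> real) \<times> _) set)"
proof -
  let ?d = "CARD('d)"
  obtain w1 where w1: "w1 > 0" "measure (weight_measure f) {w1..} > 0" using weight_tail_pos by blast
  define \<kappa> where "\<kappa> = measure (weight_measure f) {w1..} * w1 / sqrt ?d ^ ?d"
  have "\<kappa> / \<theta> \<le> measure (node_measure f \<Otimes>\<^sub>M node_measure f) (adjacency \<theta> :: (((real^'d) \<times> real) \<times> _) set)"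
    if \<theta>: "\<theta> \<ge> w1 * 2 ^ ?d" for \<theta>
  proof -
    have \<theta>_pos: "\<theta> > 0" using \<theta> w1 by (smt (verit) zero_less_power mult_pos_pos)
    \<comment> \<open>then \<open>\<theta> (sqrt d * t)\<^sup>d = w1\<close>, so a node of weight at least \<open>w1\<close> is adjacent to almost
      every node within toric distance \<open>sqrt d * t\<close>\<close>
    define t where "t = root ?d (w1 / \<theta>) / sqrt ?d"
    have "root ?d (w1 / \<theta>) \<le> root ?d ((1 / 2) ^ ?d)"
      using \<theta> \<theta>_pos by (simp add: divide_le_eq power_one_over field_simps)
    then have "root ?d (w1 / \<theta>) \<le> 1 / 2" by (simp add: real_root_power_cancel)
    moreover have "t \<le> root ?d (w1 / \<theta>)"
      unfolding t_def using divide_pos_pos[OF w1(1) \<theta>_pos]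
      by (simp add: divide_le_eq mult_le_cancel_left1)
    moreover have "0 \<le> t" unfolding t_def using w1 \<theta>_pos by simp
    ultimately have t: "0 \<le> t" "t \<le> 1 / 2" by linarith+
    have "(sqrt ?d * t) ^ ?d = w1 / \<theta>"
      unfolding t_def using w1 \<theta>_pos by simp
    then have "\<theta> * (sqrt ?d * t) ^ ?d \<le> w1" using \<theta>_pos by simp
    from measure_adjacency_ge_heavy_nodes[OF \<theta>_pos t this]
    show ?thesis unfolding \<kappa>_def t_def using w1 \<theta>_pos by (simp add: power_divide field_simps)
  qed
  moreover have "\<kappa> > 0" unfolding \<kappa>_def using w1 by simp
  moreover have "w1 * 2 ^ ?d > 0" using w1 by simp
  ultimately show ?thesis by blast
qed

end

lemma mean_edge_count_bounds:
  fixes n :: nat and L \<theta> p m c \<kappa> K :: real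
  assumes n: "n > 0" and L: "L > 0" and c: "c > 0" and \<theta>: "\<theta> = c * real n / L" and \<kappa>: "\<kappa> \<ge> 0"
    and p: "\<kappa> / \<theta> \<le> p" "p \<le> K / \<theta>"
    and m: "real n ^ 2 \<le> 4 * m" "m \<le> real n ^ 2"
  shows "\<kappa> * real n * L / (4 * c) \<le> m * p" "m * p \<le> K * real n * L / c"
proof -
  have p': "\<kappa> * L / (c * real n) \<le> p" "p \<le> K * L / (c * real n)" using p \<theta> by simp_all
  have low: "0 \<le> \<kappa> * L / (c * real n)" using \<kappa> L c by simp
  then have nonneg: "0 \<le> p" "0 \<le> K * L / (c * real n)" "0 \<le> m" using p' m
    by (smt (verit) zero_le_power2)+
  have "(real n ^ 2 / 4) * (\<kappa> * L / (c * real n)) \<le> m * p"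
    using m p' nonneg low by (intro mult_mono) auto
  then show "\<kappa> * real n * L / (4 * c) \<le> m * p"
    using n c by (simp add: power2_eq_square field_simps)
  have "m * p \<le> real n ^ 2 * (K * L / (c * real n))"
    using m p' nonneg by (intro mult_mono) auto
  then show "m * p \<le> K * real n * L / c"
    using n c by (simp add: power2_eq_square field_simps)
qed

lemma edge_count_Chebyshev_error_le:
  fixes n :: nat and L \<theta> q \<mu> c \<kappa> C Q :: real
  assumes n: "n > 0" and L: "L \<ge> 1" and c: "c > 0" and \<kappa>: "\<kappa> > 0" and \<theta>: "\<theta> = c * real n / L"
    and q: "q = (C / \<theta>)\<^sup>2 * Q" and Q: "Q \<ge> 0" and \<mu>: "\<kappa> * real n * L / (4 * c) \<le> \<mu>"
  shows "4 * (\<mu> + 4 * real n ^ 3 * q) / \<mu>\<^sup>2 \<le> (16 * c / \<kappa> + 256 * C\<^sup>2 * Q / \<kappa>\<^sup>2) / real n"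
proof -
  define X where "X = \<kappa> * real n * L / (4 * c)"
  have X: "0 < X" "X \<le> \<mu>" unfolding X_def using \<kappa> n L c \<mu> by simp_all
  have q0: "0 \<le> q" using q Q by simp
  have "4 * (\<mu> + 4 * real n ^ 3 * q) / \<mu>\<^sup>2 = 4 / \<mu> + 16 * (real n ^ 3 * q) / \<mu>\<^sup>2"
    using X by (simp add: power2_eq_square field_simps)
  also have "\<dots> \<le> 4 / X + 16 * (real n ^ 3 * q) / X\<^sup>2"
    using X q0 by (intro add_mono divide_left_mono power_mono mult_nonneg_nonneg) auto
  also have "4 / X \<le> 16 * c / (\<kappa> * real n)"
    unfolding X_def using \<kappa> n L c by (simp add: field_simps mult_le_cancel_left1)
  also have "16 * (real n ^ 3 * q) / X\<^sup>2 = 256 * C\<^sup>2 * Q / (\<kappa>\<^sup>2 * real n)"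
    unfolding X_def q \<theta> using n L c \<kappa> by (simp add: power2_eq_square power3_eq_cube field_simps)
  also have "16 * c / (\<kappa> * real n) + 256 * C\<^sup>2 * Q / (\<kappa>\<^sup>2 * real n)
      = (16 * c / \<kappa> + 256 * C\<^sup>2 * Q / \<kappa>\<^sup>2) / real n"
    using n \<kappa> by (simp add: field_simps)
  finally show ?thesis by simp
qed

context weight_density
begin

lemma gtg_edges_window_prob_ge:
  fixes c \<kappa> \<theta>0 :: real and n :: nat
  assumes \<kappa>: "\<kappa> > 0"
    and low: "\<And>\<theta>. \<theta>0 \<le> \<theta> \<Longrightarrow> \<kappa> / \<theta> \<le> measure (node_measure f \<Otimes>\<^sub>M node_measure f) (adjacency \<theta> :: (((real^'d::finite) \<times> real) \<times> _) set)"
    and n: "n \<ge> 3" and c: "c > 0" and \<theta>0: "\<theta>0 \<le> c * real n / ln (real n)"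
  shows "1 - (16 * c / \<kappa> + 256 * (toric_ball_const TYPE('d))\<^sup>2 * weight_moment / \<kappa>\<^sup>2) / real n
    \<le> measure (gtg_space f n :: (nat \<Rightarrow> (real^'d) \<times> real) measure)
        {\<omega> \<in> space (gtg_space f n).
          \<kappa> / (8 * c) * real n * ln (real n) \<le> real (gtg_edges (c * real n / ln (real n)) n \<omega>) \<and>
          real (gtg_edges (c * real n / ln (real n)) n \<omega>)
            \<le> 3 * (2 * toric_ball_const TYPE('d) * weight_mean) / (2 * c) * real n * ln (real n)}"
proof -
  let ?C = "toric_ball_const TYPE('d)" and ?N = "node_measure f :: ((real^'d) \<times> real) measure"
  define L where "L = ln (real n)"
  define \<theta> where "\<theta> = c * real n / L"
  have "exp 1 \<le> real n" using exp_le n by linarith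
  then have L: "L \<ge> 1" unfolding L_def using ln_mono[of "exp 1" "real n"] by simp
  have \<theta>: "\<theta> > 0" unfolding \<theta>_def using c L n by simp
  interpret G: iid_vertex_graph ?N "adjacency \<theta>" n
    by (rule iid_vertex_graph.intro) (simp_all add: prob_space_node_measure sets_adjacency adjacency_sym)
  define q where "q = (?C / \<theta>)\<^sup>2 * weight_moment"
  have "\<theta>0 \<le> \<theta>" using \<theta>0 by (simp add: \<theta>_def L_def)
  then have p: "\<kappa> / \<theta> \<le> G.edge_prob" "G.edge_prob \<le> 2 * ?C * weight_mean / \<theta>"
    using low measure_adjacency_le[OF \<theta>, where 'd='d] by (simp_all add: G.edge_prob_def)
  have m: "real n ^ 2 \<le> 4 * real (card (index_pairs n))" "real (card (index_pairs n)) \<le> real n ^ 2"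
    using card_index_pairs_bounds n by simp_all
  define \<mu> where "\<mu> = real (card (index_pairs n)) * G.edge_prob"
  have mean: "\<kappa> * real n * L / (4 * c) \<le> \<mu>" "\<mu> \<le> 2 * ?C * weight_mean * real n * L / c"
    using mean_edge_count_bounds[OF _ _ c \<theta>_def _ p m] n L \<kappa> by (simp_all add: \<mu>_def)
  have "0 < \<kappa> * real n * L / (4 * c)" using \<kappa> c n L by simp
  then have pos: "0 < \<mu>" using mean(1) by linarith
  have lo: "\<kappa> / (8 * c) * real n * L \<le> \<mu> / 2" using mean(1) c by (simp add: field_simps)
  have hi: "3 * \<mu> / 2 \<le> 3 * (2 * ?C * weight_mean) / (2 * c) * real n * L"
    using mean(2) c by (simp add: field_simps)
  have q: "(\<integral>\<^sup>+u. emeasure ?N (Pair u -` adjacency \<theta>) ^ 2 \<partial>?N) \<le> ennreal q" "q \<ge> 0"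
    using nn_integral_neighbourhood_sq_le[OF \<theta>, where 'd='d] weight_moment_nonneg by (simp_all add: q_def)
  have "1 - (16 * c / \<kappa> + 256 * ?C\<^sup>2 * weight_moment / \<kappa>\<^sup>2) / real n
      \<le> 1 - 4 * (\<mu> + 4 * real n ^ 3 * q) / \<mu>\<^sup>2"
    using edge_count_Chebyshev_error_le[OF _ L c \<kappa> \<theta>_def q_def weight_moment_nonneg mean(1)] n by simp
  also have "\<dots> \<le> G.P.prob {\<omega> \<in> space (PiM {..<n} (\<lambda>_. ?N)).
      \<kappa> / (8 * c) * real n * L \<le> real (edge_count (adjacency \<theta>) n \<omega>) \<and>
      real (edge_count (adjacency \<theta>) n \<omega>) \<le> 3 * (2 * ?C * weight_mean) / (2 * c) * real n * L}"
    using G.edge_count_concentration[OF q pos[unfolded \<mu>_def] lo[unfolded \<mu>_def] hi[unfolded \<mu>_def]]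
    by (simp add: \<mu>_def)
  finally show ?thesis
    unfolding gtg_space_def gtg_edges_eq_edge_count L_def[symmetric] \<theta>_def[symmetric] .
qed

lemma gtg_edges_Theta_n_log_n:
  fixes c :: real
  assumes c_pos: "c > 0"
  shows "\<exists>a b. 0 < a \<and> a \<le> b \<and>
    (\<lambda>n. measure (gtg_space f n :: (nat \<Rightarrow> (real^'d::finite) \<times> real) measure)
        {\<omega> \<in> space (gtg_space f n).
           a * real n * ln (real n) \<le> real (gtg_edges (c * real n / ln (real n)) n \<omega>) \<and>
           real (gtg_edges (c * real n / ln (real n)) n \<omega>) \<le> b * real n * ln (real n)})
    \<longlonglongrightarrow> 1"
proof -
  obtain \<kappa> \<theta>0 where \<kappa>: "\<kappa> > 0" "\<theta>0 > 0" and low: "\<forall>\<theta>\<ge>\<theta>0.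
      \<kappa> / \<theta> \<le> measure (node_measure f \<Otimes>\<^sub>M node_measure f) (adjacency \<theta> :: (((real^'d) \<times> real) \<times> _) set)"
    using measure_adjacency_ge[where 'd='d] by blast
  let ?C = "toric_ball_const TYPE('d)"
  let ?P = "\<lambda>a b n. measure (gtg_space f n :: (nat \<Rightarrow> (real^'d) \<times> real) measure)
    {\<omega> \<in> space (gtg_space f n).
       a * real n * ln (real n) \<le> real (gtg_edges (c * real n / ln (real n)) n \<omega>) \<and>
       real (gtg_edges (c * real n / ln (real n)) n \<omega>) \<le> b * real n * ln (real n)}"
  have "\<kappa> / \<theta>0 \<le> 2 * ?C * weight_mean / \<theta>0"
    using low[rule_format, OF order_refl] measure_adjacency_le[OF \<kappa>(2), where 'd='d] by linarith
  then have "\<kappa> \<le> 2 * ?C * weight_mean" using \<kappa>(2) by (simp add: divide_le_cancel)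
  then have "\<kappa> / (8 * c) \<le> 12 * (2 * ?C * weight_mean) / (8 * c)"
    using \<kappa>(1) c_pos by (intro divide_right_mono) auto
  then have ab: "\<kappa> / (8 * c) \<le> 3 * (2 * ?C * weight_mean) / (2 * c)" by simp
  have bound: "1 - (16 * c / \<kappa> + 256 * ?C\<^sup>2 * weight_moment / \<kappa>\<^sup>2) / real n
      \<le> ?P (\<kappa> / (8 * c)) (3 * (2 * ?C * weight_mean) / (2 * c)) n"
    if "3 \<le> n" "\<theta>0 \<le> c * real n / ln (real n)" for n
    by (rule gtg_edges_window_prob_ge[OF \<kappa>(1) _ that(1) c_pos that(2)]) (use low in auto)
  have "eventually (\<lambda>n. 3 \<le> n \<and> \<theta>0 \<le> c * real n / ln (real n)) sequentially"
  proof -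
    have "filterlim (\<lambda>n::nat. real n / ln (real n)) at_top sequentially" by real_asymp
    then have "filterlim (\<lambda>n::nat. c * (real n / ln (real n))) at_top sequentially"
      by (rule filterlim_tendsto_pos_mult_at_top[OF tendsto_const c_pos])
    then show ?thesis by (simp add: filterlim_at_top eventually_conj_iff eventually_ge_at_top)
  qed
  then have ev: "eventually (\<lambda>n. 1 - (16 * c / \<kappa> + 256 * ?C\<^sup>2 * weight_moment / \<kappa>\<^sup>2) / real n
      \<le> ?P (\<kappa> / (8 * c)) (3 * (2 * ?C * weight_mean) / (2 * c)) n) sequentially"
    by (rule eventually_mono) (use bound in blast)
  have le1: "?P a b n \<le> 1" for a b n
    unfolding gtg_space_def by (intro prob_space.prob_le_1 prob_space_PiM prob_space_node_measure)
  have lim: "(\<lambda>n. 1 - E / real n) \<longlonglongrightarrow> 1" for E :: real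
    by real_asymp
  have "?P (\<kappa> / (8 * c)) (3 * (2 * ?C * weight_mean) / (2 * c)) \<longlonglongrightarrow> 1"
    by (rule tendsto_sandwich[OF ev always_eventually lim tendsto_const]) (use le1 in blast)
  then show ?thesis using ab \<kappa>(1) c_pos by (intro exI[of _ "\<kappa> / (8 * c)"] exI) auto
qed

end

theorem lemma5:
  fixes f :: "real \<Rightarrow> real" and c :: real
  assumes dim: "CARD('d::finite) \<ge> 2"
    and f_nonneg: "\<And>x. f x \<ge> 0"
    and f_supp: "\<And>x. x < 0 \<Longrightarrow> f x = 0"
    and f_cont: "continuous_on {0..} f"
    and f_int: "integrable lborel f"
    and f_total: "integral\<^sup>L lborel f = 1"
    and f_mean: "integrable lborel (\<lambda>x. x * f x)"
    and f_var: "integrable lborel (\<lambda>x. x\<^sup>2 * f x)"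
    and f_tail: "\<exists>\<nu>>0. (\<lambda>x. measure (density lborel (\<lambda>t. ennreal (f t))) {x..})
                          \<in> O[at_top](\<lambda>x. 1 / x powr (real CARD('d) + \<nu>))"
    and c_pos: "c > 0"
    and c_bound: "\<exists>\<alpha>\<in>{0<..<1}. c < \<alpha> * quantile_of f (1 - \<alpha>) / 4"
  shows "\<exists>a b. 0 < a \<and> a \<le> b \<and>
    (\<lambda>n. measure (gtg_space f n :: (nat \<Rightarrow> (real^'d) \<times> real) measure)
        {\<omega> \<in> space (gtg_space f n).
           a * real n * ln (real n) \<le> real (gtg_edges (c * real n / ln (real n)) n \<omega>) \<and>
           real (gtg_edges (c * real n / ln (real n)) n \<omega>) \<le> b * real n * ln (real n)})
    \<longlonglongrightarrow> 1"
proof -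
  interpret weight_density f
    using f_nonneg f_supp f_int f_total f_mean f_var by unfold_locales
  show ?thesis by (rule gtg_edges_Theta_n_log_n[OF c_pos])
qed

end
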